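(* Impose (A1)–(A6) and (A8), fix $x\in\mathcal X$ and $u\in[0,1]$, and write $\theta(x,u)=\mathbb E[Y_1^*\mid X=x,U=u,S_0=1,S_1=1]$. Then: (i) under (A7.1), $\underline y^*\le \theta(x,u)\le \dfrac{m_1^Y(x,u)-\underline y^*\,\Delta_S(x,u)}{m_0^S(x,u)}$; (ii) under (A7.2), $\dfrac{m_1^Y(x,u)-\overline y^*\,\Delta_S(x,u)}{m_0^S(x,u)}\le\theta(x,u)\le \overline y^*$; (iii) under (A7.3) (sub-case (a) or (b)), $\dfrac{m_1^Y(x,u)-\overline y^*\,\Delta_S(x,u)}{m_0^S(x,u)}\le\theta(x,u)\le\dfrac{m_1^Y(x,u)-\underline y^*\,\Delta_S(x,u)}{m_0^S(x,u)}$.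
   Context: Standing setup. On a common probability space: $X$ (covariates, support $\mathcal X$), $Z$ (instrument, support $\mathcal Z$), $W=(X,Z)$; latent real random variables $U,V$, jointly continuously distributed conditional on $X$, with $U\mid X$ and $V\mid X$ each Uniform$[0,1]$ (their joint dependence unrestricted); real potential outcomes of interest $Y_0^*,Y_1^*$. Given functions $P:\mathcal X\times\mathcal Z\to[0,1]$ and $Q:\{0,1\}\times\mathcal X\to[0,1]$, define the treatment $D=\mathbf 1\{P(W)\ge U\}$, potential selection indicators $S_d=\mathbf 1\{Q(d,X)\ge V\}$ ($d\in\{0,1\}$), selection indicator $S=DS_1+(1-D)S_0$, potential observable outcomes $Y_d=S_dY_d^*$ and observable outcome $Y=DY_1+(1-D)Y_0$. For $x\in\mathcal X$, $u\in[0,1]$, $d\in\{0,1\}$: $m_d^Y(x,u)=\mathbb E[Y_d\mid X=x,U=u]$, $m_d^S(x,u)=\mathbb E[S_d\mid X=x,U=u]$, $\Delta_S(x,u)=m_1^S(x,u)-m_0^S(x,u)$, and $\Delta^{OO}_{Y^*}(x,u)=\mathbb E[Y_1^*-Y_0^*\mid X=x,U=u,S_0=1,S_1=1]$. Ratios appearing are assumed well defined (nonzero denominators). Assumptions: (A1) $Z$ is independent of $(U,V,Y_0^*,Y_1^* )$ conditional on $X$; (A2) the distribution of $P(W)$ given $X$ is nondegenerate; (A3) $\mathbb E|Y_d^*|<\infty$ and $\mathbb E[(Y_d^* )^2]<\infty$ for $d=0,1$; (A4) $0<\mathbb P[D=1\mid X]<1$; (A5) $X$ is invariant to counterfactual manipulation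 of treatment; (A6) $Y_0^*$ and $Y_1^*$ have a common support $\mathcal Y^*\subseteq\mathbb R$; write $\underline y^*=\inf\mathcal Y^*\in\mathbb R\cup\{-\infty\}$ and $\overline y^*=\sup\mathcal Y^*\in\mathbb R\cup\{+\infty\}$, assumed known. Support cases: (A7.1) $\underline y^*>-\infty$, $\overline y^*=+\infty$, $\mathcal Y^*$ an interval; (A7.2) $\underline y^*=-\infty$, $\overline y^*<\infty$, $\mathcal Y^*$ an interval; (A7.3) $\underline y^*,\overline y^*$ both finite and either (a) $\mathcal Y^*$ is an interval or (b) $\underline y^*\in\mathcal Y^*$ and $\overline y^*\in\mathcal Y^*$. (A8) $Q(1,x)>Q(0,x)>0$ for all $x\in\mathcal X$. *)

theory Defs
  imports "HOL-Probability.Probability"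
begin

text \<open>
  K x u is (a version of) the conditional distribution of the triple
  (V, Y0*, Y1*) given X = x, U = u; an outcome is a triple
  w = (v, y0, y1).
\<close>

type_synonym latent = "real \<times> real \<times> real"

definition Vlat :: "latent \<Rightarrow> real" where
  "Vlat w = fst w"

definition Ystar :: "nat \<Rightarrow> latent \<Rightarrow> real" where
  "Ystar d w = (if d = 0 then fst (snd w) else snd (snd w))"

definition Ssel :: "(nat \<Rightarrow> 'x \<Rightarrow> real) \<Rightarrow> nat \<Rightarrow> 'x \<Rightarrow> latent \<Rightarrow> real" where
  "Ssel Q d x w = (if Q d x \<ge> Vlat w then 1 else 0)"

definition mY :: "('x \<Rightarrow> real \<Rightarrow> latent measure) \<Rightarrow> (nat \<Rightarrow> 'x \<Rightarrow> real) \<Rightarrow> nat \<Rightarrow> 'x \<Rightarrow> real \<Rightarrow> real" where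
  "mY K Q d x u = (\<integral>w. Ssel Q d x w * Ystar d w \<partial>(K x u))"

definition mS :: "('x \<Rightarrow> real \<Rightarrow> latent measure) \<Rightarrow> (nat \<Rightarrow> 'x \<Rightarrow> real) \<Rightarrow> nat \<Rightarrow> 'x \<Rightarrow> real \<Rightarrow> real" where
  "mS K Q d x u = (\<integral>w. Ssel Q d x w \<partial>(K x u))"

definition DeltaS :: "('x \<Rightarrow> real \<Rightarrow> latent measure) \<Rightarrow> (nat \<Rightarrow> 'x \<Rightarrow> real) \<Rightarrow> 'x \<Rightarrow> real \<Rightarrow> real" where
  "DeltaS K Q x u = mS K Q 1 x u - mS K Q 0 x u"

definition always_obs :: "(nat \<Rightarrow> 'x \<Rightarrow> real) \<Rightarrow> 'x \<Rightarrow> latent set" where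
  "always_obs Q x = {w. Ssel Q 0 x w = 1 \<and> Ssel Q 1 x w = 1}"

definition theta :: "('x \<Rightarrow> real \<Rightarrow> latent measure) \<Rightarrow> (nat \<Rightarrow> 'x \<Rightarrow> real) \<Rightarrow> 'x \<Rightarrow> real \<Rightarrow> real" where
  "theta K Q x u =
     (\<integral>w. indicator (always_obs Q x) w * Ystar 1 w \<partial>(K x u))
       / measure (K x u) (always_obs Q x)"

end

theory Submission
  imports Defs
begin

text \<open>Monotone selection (A8) makes the always-observed event {S0 = 1, S1 = 1} equal to {S0 = 1},
  a subset of {S1 = 1}.  Hence m1^Y is the integral of Y1* over {S1 = 1}, which splits into its
  integral over {S0 = 1} (namely theta times m0^S) and over the marginal event {S1 = 1, S0 = 0} of
  probability DeltaS.  Bounding Y1* on that marginal event by the support bounds of Y* gives the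
  trimming bounds, and bounding it on {S0 = 1} gives the trivial ones.\<close>

lemma integrable_indicator_mult:
  fixes f :: "'a \<Rightarrow> real"
  assumes "A \<in> sets M" "integrable M f"
  shows "integrable M (\<lambda>w. indicator A w * f w)"
  using integrable_real_mult_indicator[OF assms] by (simp add: mult.commute)

lemma integral_indicator_mult_ge:
  fixes f :: "'a \<Rightarrow> real"
  assumes "finite_measure M" "A \<in> sets M" "integrable M f" "AE w in M. c \<le> f w"
  shows "c * measure M A \<le> (\<integral>w. indicator A w * f w \<partial>M)"
proof -
  interpret finite_measure M by fact
  have "(\<integral>w. indicator A w * c \<partial>M) \<le> (\<integral>w. indicator A w * f w \<partial>M)"
  proof (rule integral_mono_AE)
    show "integrable M (\<lambda>w. indicator A w * c)"
      using integrable_indicator_mult[OF assms(2) integrable_const] .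
    show "integrable M (\<lambda>w. indicator A w * f w)"
      using integrable_indicator_mult[OF assms(2,3)] .
    show "AE w in M. indicator A w * c \<le> indicator A w * f w"
      using assms(4) by (auto simp: indicator_def)
  qed
  with assms(2) show ?thesis by (simp add: mult.commute)
qed

lemma integral_indicator_mult_subset_Diff:
  fixes f :: "'a \<Rightarrow> real"
  assumes "A \<in> sets M" "B \<in> sets M" "A \<subseteq> B" "integrable M f"
  shows "(\<integral>w. indicator B w * f w \<partial>M)
           = (\<integral>w. indicator A w * f w \<partial>M) + (\<integral>w. indicator (B - A) w * f w \<partial>M)"
proof -
  have "B - A \<in> sets M" using assms(1,2) by auto
  have "(\<lambda>w. indicator B w * f w) = (\<lambda>w. indicator A w * f w + indicator (B - A) w * f w)"
    using assms(3) by (auto simp: indicator_def fun_eq_iff)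
  then show ?thesis
    using Bochner_Integration.integral_add[OF integrable_indicator_mult[OF assms(1,4)]
        integrable_indicator_mult[OF \<open>B - A \<in> sets M\<close> assms(4)]] by simp
qed

lemma subset_mean_bounds_of_lower_bound:
  fixes f :: "'a \<Rightarrow> real"
  assumes M: "finite_measure M" and sets: "A \<in> sets M" "B \<in> sets M" and "A \<subseteq> B"
    and f: "integrable M f" and lower: "AE w in M. c \<le> f w" and pos: "measure M A > 0"
  shows "c \<le> (\<integral>w. indicator A w * f w \<partial>M) / measure M A"
    and "(\<integral>w. indicator A w * f w \<partial>M) / measure M A
           \<le> ((\<integral>w. indicator B w * f w \<partial>M) - c * (measure M B - measure M A)) / measure M A"
proof -
  have "B - A \<in> sets M" using sets by auto
  have "measure M (B - A) = measure M B - measure M A"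
    using sets \<open>A \<subseteq> B\<close> M by (simp add: finite_measure.finite_measure_Diff)
  then have "(\<integral>w. indicator A w * f w \<partial>M)
               \<le> (\<integral>w. indicator B w * f w \<partial>M) - c * (measure M B - measure M A)"
    using integral_indicator_mult_ge[OF M \<open>B - A \<in> sets M\<close> f lower]
      integral_indicator_mult_subset_Diff[OF sets \<open>A \<subseteq> B\<close> f] by simp
  then show "(\<integral>w. indicator A w * f w \<partial>M) / measure M A
               \<le> ((\<integral>w. indicator B w * f w \<partial>M) - c * (measure M B - measure M A)) / measure M A"
    using pos by (simp add: divide_right_mono)
  show "c \<le> (\<integral>w. indicator A w * f w \<partial>M) / measure M A"
    using integral_indicator_mult_ge[OF M sets(1) f lower] pos by (simp add: pos_le_divide_eq)
qed

lemma subset_mean_bounds_of_upper_bound: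
  fixes f :: "'a \<Rightarrow> real"
  assumes "finite_measure M" "A \<in> sets M" "B \<in> sets M" "A \<subseteq> B"
    and "integrable M f" and upper: "AE w in M. f w \<le> c" and "measure M A > 0"
  shows "(\<integral>w. indicator A w * f w \<partial>M) / measure M A \<le> c"
    and "((\<integral>w. indicator B w * f w \<partial>M) - c * (measure M B - measure M A)) / measure M A
           \<le> (\<integral>w. indicator A w * f w \<partial>M) / measure M A"
proof -
  have "AE w in M. - c \<le> - f w" using upper by auto
  from subset_mean_bounds_of_lower_bound[OF assms(1-4) _ this assms(7)] assms(5)
  show "(\<integral>w. indicator A w * f w \<partial>M) / measure M A \<le> c"
    and "((\<integral>w. indicator B w * f w \<partial>M) - c * (measure M B - measure M A)) / measure M A
           \<le> (\<integral>w. indicator A w * f w \<partial>M) / measure M A"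
    by (simp_all add: integral_minus diff_divide_distrib)
qed

lemma Ssel_eq_indicator: "Ssel Q d x = indicator {w. Vlat w \<le> Q d x}"
  by (auto simp: Ssel_def indicator_def fun_eq_iff)

lemma always_obs_eq_selected:
  "Q 0 x \<le> Q 1 x \<Longrightarrow> always_obs Q x = {w. Vlat w \<le> Q 0 x}"
  by (auto simp: always_obs_def Ssel_def)

lemma Vlat_le_in_borel: "{w. Vlat w \<le> c} \<in> sets (borel :: latent measure)"
  unfolding Vlat_def by (intro borel_closed closed_Collect_le continuous_intros)

lemma selection_moments_as_integrals:
  fixes K :: "'x \<Rightarrow> real \<Rightarrow> latent measure" and x :: 'x and u :: real
    and Q :: "nat \<Rightarrow> 'x \<Rightarrow> real"
  assumes "sets (K x u) = sets borel" "Q 0 x \<le> Q 1 x"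
  defines "A \<equiv> {w. Vlat w \<le> Q 0 x}" and "B \<equiv> {w. Vlat w \<le> Q 1 x}"
  shows "theta K Q x u = (\<integral>w. indicator A w * Ystar 1 w \<partial>K x u) / measure (K x u) A"
    and "mY K Q 1 x u = (\<integral>w. indicator B w * Ystar 1 w \<partial>K x u)"
    and "mS K Q 0 x u = measure (K x u) A"
    and "DeltaS K Q x u = measure (K x u) B - measure (K x u) A"
  using always_obs_eq_selected[of Q x] assms(1,2) Vlat_le_in_borel
  by (simp_all add: theta_def mY_def mS_def DeltaS_def Ssel_eq_indicator A_def B_def)

theorem proposition1:
  fixes K :: "'x \<Rightarrow> real \<Rightarrow> latent measure"
    and Q :: "nat \<Rightarrow> 'x \<Rightarrow> real"
    and Xset :: "'x set" and Ys :: "real set"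
    and x :: 'x and u :: real
  assumes x_in: "x \<in> Xset" and u_in: "u \<in> {0..1}"
    and Q_range: "\<forall>d\<in>{0,1}. \<forall>x'\<in>Xset. Q d x' \<in> {0..1}"
    and A8: "\<forall>x'\<in>Xset. Q 1 x' > Q 0 x' \<and> Q 0 x' > 0"
    and prob: "prob_space (K x u)"
    and sets_K: "sets (K x u) = sets borel"
    and A3: "\<forall>d\<in>{0,1}. integrable (K x u) (Ystar d) \<and> integrable (K x u) (\<lambda>w. (Ystar d w)\<^sup>2)"
    and A6: "AE w in K x u. Ystar 0 w \<in> Ys \<and> Ystar 1 w \<in> Ys"
    and denom1: "mS K Q 0 x u \<noteq> 0"
    and denom2: "measure (K x u) (always_obs Q x) \<noteq> 0"
  shows
    "(bdd_below Ys \<and> \<not> bdd_above Ys \<and> is_interval Ys \<longrightarrow>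
        Inf Ys \<le> theta K Q x u \<and>
        theta K Q x u \<le> (mY K Q 1 x u - Inf Ys * DeltaS K Q x u) / mS K Q 0 x u)
     \<and> (\<not> bdd_below Ys \<and> bdd_above Ys \<and> is_interval Ys \<longrightarrow>
        (mY K Q 1 x u - Sup Ys * DeltaS K Q x u) / mS K Q 0 x u \<le> theta K Q x u \<and>
        theta K Q x u \<le> Sup Ys)
     \<and> (bdd_below Ys \<and> bdd_above Ys \<and> (is_interval Ys \<or> (Inf Ys \<in> Ys \<and> Sup Ys \<in> Ys)) \<longrightarrow>
        (mY K Q 1 x u - Sup Ys * DeltaS K Q x u) / mS K Q 0 x u \<le> theta K Q x u \<and>
        theta K Q x u \<le> (mY K Q 1 x u - Inf Ys * DeltaS K Q x u) / mS K Q 0 x u)"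
proof -
  let ?M = "K x u"
  define A where "A = {w. Vlat w \<le> Q 0 x}"
  define B where "B = {w. Vlat w \<le> Q 1 x}"
  have sets: "A \<in> sets ?M" "B \<in> sets ?M"
    unfolding A_def B_def sets_K by (rule Vlat_le_in_borel)+
  have "Q 0 x \<le> Q 1 x" using A8 x_in by auto
  then have "A \<subseteq> B" unfolding A_def B_def by auto
  note reduce =
    selection_moments_as_integrals[of K x u Q, OF sets_K \<open>Q 0 x \<le> Q 1 x\<close>, folded A_def B_def]
  have "finite_measure ?M" using prob by (rule prob_space.finite_measure)
  have pos: "measure ?M A > 0" using denom1 by (simp add: reduce zero_less_measure_iff)
  have f: "integrable ?M (Ystar 1)" using A3 by auto
  have lower: "Inf Ys \<le> theta K Q x u \<and>
      theta K Q x u \<le> (mY K Q 1 x u - Inf Ys * DeltaS K Q x u) / mS K Q 0 x u"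
    if "bdd_below Ys"
  proof -
    have "AE w in ?M. Inf Ys \<le> Ystar 1 w"
      using A6 by eventually_elim (use that in \<open>auto intro: cInf_lower\<close>)
    from subset_mean_bounds_of_lower_bound[OF \<open>finite_measure ?M\<close> sets \<open>A \<subseteq> B\<close> f this pos]
    show ?thesis unfolding reduce by simp
  qed
  have upper: "(mY K Q 1 x u - Sup Ys * DeltaS K Q x u) / mS K Q 0 x u \<le> theta K Q x u \<and>
      theta K Q x u \<le> Sup Ys"
    if "bdd_above Ys"
  proof -
    have "AE w in ?M. Ystar 1 w \<le> Sup Ys"
      using A6 by eventually_elim (use that in \<open>auto intro: cSup_upper\<close>)
    from subset_mean_bounds_of_upper_bound[OF \<open>finite_measure ?M\<close> sets \<open>A \<subseteq> B\<close> f this pos]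
    show ?thesis unfolding reduce by simp
  qed
  show ?thesis using lower upper by (intro conjI impI) simp_all
qed

end
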